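(* Suppose $\Phi$ is of affine type, $c$ is a Coxeter element, and $\beta$ is a root contained in $U_c$. Then $E_c(\beta^\vee,\delta)=E_c(\delta^\vee,\beta)=0$.
   Context: $A=[a_{ij}]_{1\le i,j\le n}$ is a symmetrizable Cartan matrix of affine type with symmetrizing constants $d_i$; $V$ has basis of simple roots $\alpha_1,\dots,\alpha_n$, simple co-roots $\alpha_i^\vee=d_i^{-1}\alpha_i$, and symmetric bilinear form $K$ with $K(\alpha_i^\vee,\alpha_j)=a_{ij}$; $W$ is generated by $s_i(v)=v-K(\alpha_i^\vee,v)\alpha_i$. $\Phi$ is the root system; its imaginary roots are the nonzero integer multiples of $\delta$, the positive imaginary root closest to $0$. For a real root $\beta$, $\beta^\vee=\frac2{K(\beta,\beta)}\beta$; $\delta^\vee$ is the positive imaginary root closest to $0$ in the dual root system (Cartan matrix $A^T$), a positive multiple of $\delta$ (and $\beta^\vee$ means $\delta^\vee$ when $\beta=\delta$). A Coxeter element $c$ is indexed as $c=s_1\cdots s_n$; $E_c$ is the bilinear form on $V$ with $E_c(\alpha_i^\vee,\alpha_j)=a_{ij}$ if $i>j$, $1$ if $i=j$, $0$ if $i<j$. With $\alpha_{\mathrm{aff}}$ the affine simple root and $V_{\mathrm{fin}}$ the span of the other simple roots, $\gamma_c$ is the unique vector of $V_{\mathrm{fin}}$ with $c\gamma_c=\gamma_c+\delta$, and $U_c=\{v\in V:K(\gamma_c,v)=0\}$. *)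

theory Defs
  imports Main "HOL.Real"
begin

text \<open>Indices run over 0..n-1 (the paper's 1..n shifted by one).
A vector of V is represented by its coordinates in the basis of simple roots,
as a function nat => real that is zero outside {0..<n}.\<close>

definition gcm :: "nat \<Rightarrow> (nat \<Rightarrow> nat \<Rightarrow> int) \<Rightarrow> bool" where
  "gcm n A \<longleftrightarrow> 0 < n \<and> (\<forall>i<n. A i i = 2) \<and> (\<forall>i<n. \<forall>j<n. i \<noteq> j \<longrightarrow> A i j \<le> 0)
     \<and> (\<forall>i<n. \<forall>j<n. A i j = 0 \<longleftrightarrow> A j i = 0)"

definition indecomposable :: "nat \<Rightarrow> (nat \<Rightarrow> nat \<Rightarrow> int) \<Rightarrow> bool" where
  "indecomposable n A \<longleftrightarrow> \<not> (\<exists>S. S \<subseteq> {..<n} \<and> S \<noteq> {} \<and> S \<noteq> {..<n} \<and>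
      (\<forall>i\<in>S. \<forall>j\<in>{..<n} - S. A i j = 0))"

text \<open>Affine type (Kac, Thm. 4.3): indecomposable GCM with a positive null vector.\<close>
definition affine_type :: "nat \<Rightarrow> (nat \<Rightarrow> nat \<Rightarrow> int) \<Rightarrow> bool" where
  "affine_type n A \<longleftrightarrow> gcm n A \<and> indecomposable n A \<and>
     (\<exists>u::nat \<Rightarrow> real. (\<forall>i<n. u i > 0) \<and> (\<forall>i<n. (\<Sum>j<n. of_int (A i j) * u j) = 0))"

definition symmetrizer :: "nat \<Rightarrow> (nat \<Rightarrow> nat \<Rightarrow> int) \<Rightarrow> (nat \<Rightarrow> real) \<Rightarrow> bool" where
  "symmetrizer n A d \<longleftrightarrow> (\<forall>i<n. d i > 0) \<and>
     (\<forall>i<n. \<forall>j<n. d i * of_int (A i j) = d j * of_int (A j i))"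

text \<open>The form K with K(alpha_i^vee, alpha_j) = a_ij, i.e. K(alpha_i, alpha_j) = d_i a_ij.\<close>
definition Kform :: "nat \<Rightarrow> (nat \<Rightarrow> nat \<Rightarrow> int) \<Rightarrow> (nat \<Rightarrow> real) \<Rightarrow> (nat \<Rightarrow> real) \<Rightarrow> (nat \<Rightarrow> real) \<Rightarrow> real" where
  "Kform n A d u v = (\<Sum>i<n. \<Sum>j<n. d i * of_int (A i j) * u i * v j)"

definition simple_root :: "nat \<Rightarrow> nat \<Rightarrow> real" where
  "simple_root i = (\<lambda>j. if j = i then 1 else 0)"

definition simple_coroot :: "(nat \<Rightarrow> real) \<Rightarrow> nat \<Rightarrow> nat \<Rightarrow> real" where
  "simple_coroot d i = (\<lambda>j. simple_root i j / d i)"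

definition sref :: "nat \<Rightarrow> (nat \<Rightarrow> nat \<Rightarrow> int) \<Rightarrow> (nat \<Rightarrow> real) \<Rightarrow> nat \<Rightarrow> (nat \<Rightarrow> real) \<Rightarrow> (nat \<Rightarrow> real)" where
  "sref n A d i v = (\<lambda>j. v j - Kform n A d (simple_coroot d i) v * simple_root i j)"

inductive_set real_roots :: "nat \<Rightarrow> (nat \<Rightarrow> nat \<Rightarrow> int) \<Rightarrow> (nat \<Rightarrow> real) \<Rightarrow> (nat \<Rightarrow> real) set"
  for n A d where
  simple: "i < n \<Longrightarrow> simple_root i \<in> real_roots n A d"
| refl: "\<beta> \<in> real_roots n A d \<Longrightarrow> i < n \<Longrightarrow> sref n A d i \<beta> \<in> real_roots n A d"

text \<open>Primitive positive integer null vector of a matrix M (coordinates in the simple basis):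
for M = A this is delta, the positive imaginary root closest to 0.\<close>
definition null_root :: "nat \<Rightarrow> (nat \<Rightarrow> nat \<Rightarrow> int) \<Rightarrow> nat \<Rightarrow> real" where
  "null_root n M = (THE v. (\<forall>i. n \<le> i \<longrightarrow> v i = 0) \<and> (\<forall>i<n. v i \<in> \<int> \<and> v i > 0) \<and>
      (\<forall>i<n. (\<Sum>j<n. of_int (M i j) * v j) = 0) \<and>
      (\<forall>w. (\<forall>i. n \<le> i \<longrightarrow> w i = 0) \<and> (\<forall>i<n. w i \<in> \<int>) \<and>
           (\<forall>i<n. (\<Sum>j<n. of_int (M i j) * w j) = 0) \<longrightarrow> (\<exists>k\<in>\<int>. \<forall>i. w i = k * v i)))"

definition delta :: "nat \<Rightarrow> (nat \<Rightarrow> nat \<Rightarrow> int) \<Rightarrow> nat \<Rightarrow> real" where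
  "delta n A = null_root n A"

text \<open>delta^vee: the positive imaginary root closest to 0 of the dual root system
(Cartan matrix A^T, simple roots alpha_i^vee = alpha_i / d_i), expressed in the alpha basis.\<close>
definition delta_vee :: "nat \<Rightarrow> (nat \<Rightarrow> nat \<Rightarrow> int) \<Rightarrow> (nat \<Rightarrow> real) \<Rightarrow> nat \<Rightarrow> real" where
  "delta_vee n A d = (\<lambda>i. null_root n (\<lambda>i j. A j i) i / d i)"

definition roots :: "nat \<Rightarrow> (nat \<Rightarrow> nat \<Rightarrow> int) \<Rightarrow> (nat \<Rightarrow> real) \<Rightarrow> (nat \<Rightarrow> real) set" where
  "roots n A d = real_roots n A d \<union> {(\<lambda>i. of_int k * delta n A i) | k::int. k \<noteq> 0}"

text \<open>Co-root: 2 beta / K(beta,beta) for real beta; for imaginary beta = k delta we use k delta^vee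
(so that delta^vee is the co-root of delta).\<close>
definition coroot :: "nat \<Rightarrow> (nat \<Rightarrow> nat \<Rightarrow> int) \<Rightarrow> (nat \<Rightarrow> real) \<Rightarrow> (nat \<Rightarrow> real) \<Rightarrow> nat \<Rightarrow> real" where
  "coroot n A d \<beta> = (if \<beta> \<in> real_roots n A d
      then (\<lambda>i. 2 * \<beta> i / Kform n A d \<beta> \<beta>)
      else (\<lambda>i. (THE k. \<forall>j. \<beta> j = k * delta n A j) * delta_vee n A d i))"

text \<open>Coxeter element c = s_0 s_1 ... s_(n-1) (paper: s_1 ... s_n).\<close>
definition cox :: "nat \<Rightarrow> (nat \<Rightarrow> nat \<Rightarrow> int) \<Rightarrow> (nat \<Rightarrow> real) \<Rightarrow> (nat \<Rightarrow> real) \<Rightarrow> (nat \<Rightarrow> real)" where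
  "cox n A d v = foldr (sref n A d) [0..<n] v"

text \<open>E_c(alpha_i^vee, alpha_j) = a_ij (i>j), 1 (i=j), 0 (i<j).\<close>
definition Ecform :: "nat \<Rightarrow> (nat \<Rightarrow> nat \<Rightarrow> int) \<Rightarrow> (nat \<Rightarrow> real) \<Rightarrow> (nat \<Rightarrow> real) \<Rightarrow> (nat \<Rightarrow> real) \<Rightarrow> real" where
  "Ecform n A d u v = (\<Sum>i<n. \<Sum>j<n.
      d i * (if i > j then of_int (A i j) else if i = j then 1 else 0) * u i * v j)"

text \<open>gamma_c: the unique vector in V_fin (span of simple roots other than alpha_aff)
with c gamma_c = gamma_c + delta.\<close>
definition gamma_c :: "nat \<Rightarrow> (nat \<Rightarrow> nat \<Rightarrow> int) \<Rightarrow> (nat \<Rightarrow> real) \<Rightarrow> nat \<Rightarrow> nat \<Rightarrow> real" where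
  "gamma_c n A d aff = (THE \<gamma>. (\<forall>j. (n \<le> j \<or> j = aff) \<longrightarrow> \<gamma> j = 0) \<and>
      cox n A d \<gamma> = (\<lambda>j. \<gamma> j + delta n A j))"

definition U_c :: "nat \<Rightarrow> (nat \<Rightarrow> nat \<Rightarrow> int) \<Rightarrow> (nat \<Rightarrow> real) \<Rightarrow> nat \<Rightarrow> (nat \<Rightarrow> real) set" where
  "U_c n A d aff = {v. (\<forall>j. n \<le> j \<longrightarrow> v j = 0) \<and> Kform n A d (gamma_c n A d aff) v = 0}"

end

theory Submission
  imports Defs "Jordan_Normal_Form.Determinant"
begin

text \<open>Since E_c(u, v) + E_c(v, u) = K(u, v) and K(v, \<delta>) = 0 for all v, we get
  E_c(\<delta>, \<delta>) = 0 and E_c(\<delta>, \<beta>) = - E_c(\<beta>, \<delta>). Splitting the Cartan matrix as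
  A = U + L into unitriangular upper and lower parts, c = - U^-1 L, so c \<gamma> = \<gamma> + \<delta> says
  exactly A \<gamma> = L \<delta>; hence K(\<gamma>_c, v) = E_c(v, \<delta>) and \<beta> \<in> U_c means E_c(\<beta>, \<delta>) = 0.
  The coroot of \<beta> is a multiple of \<beta> or of \<delta>^vee, and \<delta>^vee is a multiple of \<delta> because
  d \<delta> spans the kernel of A^T.

  For an
  indecomposable matrix with nonpositive off-diagonal entries and a positive null vector, a
  maximum principle shows that replacing any one row by a unit row gives an injective, hence
  invertible, system; this yields rational (hence primitive integral) null vectors and the
  solution \<gamma>_c.\<close>

section \<open>Matrices with nonpositive off-diagonal entries and a positive null vector\<close>

definition matvec :: "nat \<Rightarrow> (nat \<Rightarrow> nat \<Rightarrow> int) \<Rightarrow> (nat \<Rightarrow> 'a::comm_ring_1) \<Rightarrow> nat \<Rightarrow> 'a" where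
  "matvec n M w i = (\<Sum>j<n. of_int (M i j) * w j)"

lemma matvec_diff: "matvec n M (\<lambda>j. v j - w j) i = matvec n M v i - matvec n M w i"
  by (simp add: matvec_def right_diff_distrib sum_subtractf)

lemma matvec_scale: "matvec n M (\<lambda>j. c * w j) i = c * matvec n M w i"
  by (simp add: matvec_def sum_distrib_left mult.left_commute)

lemma matvec_uminus: "matvec n M (\<lambda>j. - w j) i = - matvec n M w i"
  by (simp add: matvec_def sum_negf)

lemma matvec_cong: "(\<And>j. j < n \<Longrightarrow> v j = w j) \<Longrightarrow> matvec n M v i = matvec n M w i"
  by (simp add: matvec_def)

lemma matvec_of_rat: "matvec n M (\<lambda>j. of_rat (q j)) i = (of_rat (matvec n M q i) :: real)"
  by (simp add: matvec_def of_rat_sum of_rat_mult)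

lemma indecomposableD:
  assumes "indecomposable n M" "S \<subseteq> {..<n}" "S \<noteq> {}" "S \<noteq> {..<n}"
  obtains i j where "i \<in> S" "j < n" "j \<notin> S" "M i j \<noteq> 0"
  using assms unfolding indecomposable_def by blast

lemma indecomposable_transpose:
  assumes "indecomposable n M" and "\<forall>i<n. \<forall>j<n. M i j = 0 \<longleftrightarrow> M j i = 0"
  shows "indecomposable n (\<lambda>i j. M j i)"
  using assms unfolding indecomposable_def by blast

lemma null_row_support:
  fixes v :: "nat \<Rightarrow> real"
  assumes off: "\<And>k. k < n \<Longrightarrow> k \<noteq> i \<Longrightarrow> M i k \<le> 0"
    and nonneg: "\<And>k. k < n \<Longrightarrow> v k \<ge> 0"
    and vi: "v i = 0" and row: "matvec n M v i = 0"
    and j: "j < n" "v j > 0"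
  shows "M i j = 0"
proof -
  have terms: "- (of_int (M i k) * v k) \<ge> 0" if "k \<in> {..<n}" for k
    using that off[of k] nonneg[of k] vi by (cases "k = i") (auto simp: mult_nonpos_nonneg)
  have "(\<Sum>k<n. - (of_int (M i k) * v k)) = 0"
    using row by (simp add: matvec_def sum_negf)
  hence "\<forall>k\<in>{..<n}. - (of_int (M i k) * v k) = 0"
    using terms by (subst (asm) sum_nonneg_eq_0_iff) auto
  thus ?thesis using j by auto
qed

locale positive_null_Z_matrix =
  fixes n :: nat and M :: "nat \<Rightarrow> nat \<Rightarrow> int" and u :: "nat \<Rightarrow> real"
  assumes off_diag_nonpos: "\<And>i j. i < n \<Longrightarrow> j < n \<Longrightarrow> i \<noteq> j \<Longrightarrow> M i j \<le> 0"
    and indec: "indecomposable n M"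
    and u_pos: "\<And>i. i < n \<Longrightarrow> u i > 0"
    and u_null: "\<And>i. i < n \<Longrightarrow> matvec n M u i = 0"
begin

text \<open>A maximum principle: shift w by the largest multiple of u staying below it; the
  coordinates where the shifted vector vanishes form a block that indecomposability forbids.\<close>
lemma null_except_row_nonneg:
  fixes w :: "nat \<Rightarrow> real"
  assumes p: "p < n" and wp: "w p = 0"
    and rows: "\<And>i. i < n \<Longrightarrow> i \<noteq> p \<Longrightarrow> matvec n M w i = 0"
    and i: "i < n"
  shows "w i \<ge> 0"
proof (rule ccontr)
  assume "\<not> w i \<ge> 0"
  define t where "t = Min ((\<lambda>k. w k / u k) ` {..<n})"
  have t_le: "t \<le> w k / u k" if "k < n" for k
    unfolding t_def using that by simp
  obtain k0 where k0: "k0 < n" "t = w k0 / u k0"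
    using Min_in[of "(\<lambda>k. w k / u k) ` {..<n}"] p unfolding t_def by fastforce
  have "t < 0"
    using t_le[OF i] \<open>\<not> w i \<ge> 0\<close> u_pos[OF i] by (smt (verit) divide_neg_pos)
  define v where "v = (\<lambda>k. w k - t * u k)"
  have v_nonneg: "v k \<ge> 0" if "k < n" for k
    using t_le[OF that] u_pos[OF that] by (simp add: v_def pos_le_divide_eq)
  define S where "S = {k. k < n \<and> v k = 0}"
  have "k0 \<in> S" using k0 u_pos[of k0] by (simp add: S_def v_def)
  moreover have "p \<notin> S"
    using \<open>t < 0\<close> u_pos[OF p] wp by (simp add: S_def v_def mult_neg_pos)
  moreover have "M k j = 0" if "k \<in> S" "j < n" "j \<notin> S" for k j
  proof (rule null_row_support[where v = v])
    show "matvec n M v k = 0"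
      using that \<open>p \<notin> S\<close> rows u_null by (auto simp: S_def v_def matvec_diff matvec_scale)
    show "v j > 0" using that v_nonneg[of j] by (auto simp: S_def)
  qed (use that off_diag_nonpos v_nonneg in \<open>auto simp: S_def\<close>)
  ultimately show False
    using indecomposableD[OF indec, of S] p by (auto simp: S_def)
qed

lemma null_except_row_zero:
  fixes w :: "nat \<Rightarrow> real"
  assumes "p < n" and "w p = 0"
    and "\<And>i. i < n \<Longrightarrow> i \<noteq> p \<Longrightarrow> matvec n M w i = 0"
    and "i < n"
  shows "w i = 0"
proof -
  have "w i \<ge> 0" by (rule null_except_row_nonneg) (use assms in auto)
  moreover have "- w i \<ge> 0"
    by (rule null_except_row_nonneg[of p]) (use assms in \<open>auto simp: matvec_uminus\<close>)
  ultimately show ?thesis by simp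
qed

lemma null_vector_multiple:
  fixes w :: "nat \<Rightarrow> real"
  assumes "\<And>i. i < n \<Longrightarrow> matvec n M w i = 0"
  shows "\<exists>t. \<forall>i<n. w i = t * u i"
proof (cases "n = 0")
  case False
  define t where "t = w 0 / u 0"
  have "w 0 - t * u 0 = 0" using False u_pos[of 0] by (simp add: t_def)
  moreover have "matvec n M (\<lambda>j. w j - t * u j) i = 0" if "i < n" for i
    using assms u_null that by (simp add: matvec_diff matvec_scale)
  ultimately have "w i - t * u i = 0" if "i < n" for i
    using null_except_row_zero[of 0 "\<lambda>j. w j - t * u j"] False that by blast
  thus ?thesis by auto
qed simp

end

section \<open>Solving the reduced system\<close>

lemma det_nonzero_solvable:
  assumes B: "(B :: 'a :: field mat) \<in> carrier_mat n n" and "det B \<noteq> 0" and c: "c \<in> carrier_vec n"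
  shows "\<exists>x \<in> carrier_vec n. B *\<^sub>v x = c"
proof -
  obtain C where C: "C \<in> carrier_mat n n" and BC: "B * C = 1\<^sub>m n"
    using det_non_zero_imp_unit[OF B \<open>det B \<noteq> 0\<close>] unfolding Units_def ring_mat_def by auto
  have "B *\<^sub>v (C *\<^sub>v c) = (B * C) *\<^sub>v c"
    using B C c by simp
  also have "\<dots> = c"
    using BC c by simp
  finally have "B *\<^sub>v (C *\<^sub>v c) = c" .
  moreover have "C *\<^sub>v c \<in> carrier_vec n" using C c by simp
  ultimately show ?thesis by blast
qed

definition reduced_matrix :: "nat \<Rightarrow> (nat \<Rightarrow> nat \<Rightarrow> int) \<Rightarrow> nat \<Rightarrow> int mat" where
  "reduced_matrix n M p = mat n n (\<lambda>(i, j). if i = p then (if j = p then 1 else 0) else M i j)"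

lemma reduced_matrix_mult_vec:
  assumes "p < n" "i < n" "v \<in> carrier_vec n"
  shows "(map_mat (of_int :: int \<Rightarrow> 'a::comm_ring_1) (reduced_matrix n M p) *\<^sub>v v) $ i =
    (if i = p then v $ p else matvec n M (\<lambda>j. v $ j) i)"
proof -
  have "(map_mat of_int (reduced_matrix n M p) *\<^sub>v v) $ i =
      (\<Sum>j<n. of_int (if i = p then (if j = p then 1 else 0) else M i j) * (v $ j :: 'a))"
    using assms by (simp add: reduced_matrix_def scalar_prod_def atLeast0LessThan)
  also have "\<dots> = (if i = p then v $ p else matvec n M (\<lambda>j. v $ j) i)"
    using assms(1) by (cases "i = p")
      (simp_all add: matvec_def if_distrib[of of_int] if_distrib[of "\<lambda>x. x * _"] cong: if_cong)
  finally show ?thesis .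
qed

context positive_null_Z_matrix
begin

lemma det_reduced_matrix_nonzero:
  assumes p: "p < n"
  shows "det (reduced_matrix n M p) \<noteq> 0"
proof
  let ?R = "map_mat (of_int :: int \<Rightarrow> real) (reduced_matrix n M p)"
  have R: "?R \<in> carrier_mat n n" by (simp add: reduced_matrix_def)
  assume "det (reduced_matrix n M p) = 0"
  then have "det ?R = 0" by simp
  then obtain v where v: "v \<in> carrier_vec n" "v \<noteq> 0\<^sub>v n" and kernel: "?R *\<^sub>v v = 0\<^sub>v n"
    unfolding det_0_iff_vec_prod_zero_field[OF R] by blast
  have eqs: "(if i = p then v $ p else matvec n M (\<lambda>j. v $ j) i) = 0" if "i < n" for i
    using arg_cong[OF kernel, of "\<lambda>x. x $ i"] reduced_matrix_mult_vec[OF p that v(1)] that by simp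
  have "v $ i = 0" if "i < n" for i
  proof (rule null_except_row_zero[OF p])
    show "v $ p = 0" using eqs[OF p] by simp
    show "matvec n M (\<lambda>j. v $ j) k = 0" if "k < n" "k \<noteq> p" for k
      using eqs[of k] that by simp
  qed (rule that)
  with v show False by auto
qed

lemma reduced_system_solvable:
  fixes c :: "'a::field_char_0"
  assumes p: "p < n"
  shows "\<exists>x. x p = c \<and> (\<forall>i<n. i \<noteq> p \<longrightarrow> matvec n M x i = b i)"
proof -
  let ?R = "map_mat (of_int :: int \<Rightarrow> 'a) (reduced_matrix n M p)"
  have R: "?R \<in> carrier_mat n n" by (simp add: reduced_matrix_def)
  have "det ?R \<noteq> 0" using det_reduced_matrix_nonzero[OF p] by simp
  then obtain x where x: "x \<in> carrier_vec n" "?R *\<^sub>v x = vec n (\<lambda>i. if i = p then c else b i)"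
    using det_nonzero_solvable[OF R, of "vec n (\<lambda>i. if i = p then c else b i)"] by auto
  have eqs: "(if i = p then x $ p else matvec n M (\<lambda>j. x $ j) i) = (if i = p then c else b i)"
    if "i < n" for i
    using arg_cong[OF x(2), of "\<lambda>y. y $ i"] reduced_matrix_mult_vec[OF p that x(1)] that by simp
  show ?thesis
  proof (rule exI[of _ "\<lambda>j. x $ j"], intro conjI allI impI)
    show "x $ p = c" using eqs[OF p] by simp
    show "matvec n M (\<lambda>j. x $ j) i = b i" if "i < n" "i \<noteq> p" for i
      using eqs[of i] that by simp
  qed
qed

end

section \<open>Primitive null vectors\<close>

definition positive_int_null_vector :: "nat \<Rightarrow> (nat \<Rightarrow> nat \<Rightarrow> int) \<Rightarrow> (nat \<Rightarrow> real) \<Rightarrow> bool" where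
  "positive_int_null_vector n M v \<longleftrightarrow> (\<forall>i. n \<le> i \<longrightarrow> v i = 0) \<and> (\<forall>i<n. v i \<in> \<int> \<and> v i > 0) \<and>
     (\<forall>i<n. matvec n M v i = 0)"

definition primitive_null_vector :: "nat \<Rightarrow> (nat \<Rightarrow> nat \<Rightarrow> int) \<Rightarrow> (nat \<Rightarrow> real) \<Rightarrow> bool" where
  "primitive_null_vector n M v \<longleftrightarrow> positive_int_null_vector n M v \<and>
     (\<forall>w. (\<forall>i. n \<le> i \<longrightarrow> w i = 0) \<and> (\<forall>i<n. w i \<in> \<int>) \<and> (\<forall>i<n. matvec n M w i = 0) \<longrightarrow>
       (\<exists>k\<in>\<int>. \<forall>i. w i = k * v i))"

lemma null_root_eq_The: "null_root n M = The (primitive_null_vector n M)"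
  unfolding null_root_def primitive_null_vector_def positive_int_null_vector_def matvec_def
  by (simp add: conj_assoc)

lemma common_denominator:
  fixes q :: "nat \<Rightarrow> rat"
  shows "\<exists>N \<in> \<int>. N > 0 \<and> (\<forall>i<n. q i * N \<in> \<int>)"
proof (induction n)
  case (Suc n)
  then obtain N where N: "N \<in> \<int>" "N > 0" "\<forall>i<n. q i * N \<in> \<int>" by blast
  obtain a b where ab: "quotient_of (q n) = (a, b)" by fastforce
  have "b > 0" using quotient_of_denom_pos[OF ab] .
  have "q n * (N * of_int b) = of_int a * N"
    using quotient_of_div[OF ab] \<open>b > 0\<close> by simp
  then have "q n * (N * of_int b) \<in> \<int>" using N(1) by (metis Ints_mult Ints_of_int)
  moreover have "q i * (N * of_int b) \<in> \<int>" if "i < n" for i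
    using N(3) that by (metis Ints_mult Ints_of_int mult.assoc)
  ultimately have "\<forall>i<Suc n. q i * (N * of_int b) \<in> \<int>"
    by (auto simp: less_Suc_eq)
  moreover have "N * of_int b \<in> \<int>" "N * of_int b > 0" using N \<open>b > 0\<close> by auto
  ultimately show ?case by blast
qed (rule bexI[of _ 1], auto)

lemma primitive_null_vector_unique:
  assumes "0 < n" and v: "primitive_null_vector n M v" and v': "primitive_null_vector n M v'"
  shows "v' = v"
proof -
  have pos: "positive_int_null_vector n M v" "positive_int_null_vector n M v'"
    using v v' by (auto simp: primitive_null_vector_def)
  obtain k where k: "k \<in> \<int>" "\<forall>i. v' i = k * v i"
    using v pos(2) by (auto simp: primitive_null_vector_def positive_int_null_vector_def)
  obtain k' where k': "k' \<in> \<int>" "\<forall>i. v i = k' * v' i"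
    using v' pos(1) by (auto simp: primitive_null_vector_def positive_int_null_vector_def)
  have "v 0 > 0" "v' 0 > 0" using pos \<open>0 < n\<close> by (auto simp: positive_int_null_vector_def)
  then have "k > 0" using k(2) zero_less_mult_pos2 by metis
  have "v 0 = (k' * k) * v 0" using k(2) k'(2) by (metis mult.assoc)
  then have "k' * k = 1" using \<open>v 0 > 0\<close> by simp
  obtain a b where "k = of_int a" "k' = of_int b" using k(1) k'(1) by (elim Ints_cases)
  with \<open>k > 0\<close> \<open>k' * k = 1\<close> have "a > 0" "a * b = 1"
    by (simp_all add: mult.commute flip: of_int_mult)
  then have "k = 1" using \<open>k = of_int a\<close> pos_zmult_eq_1_iff by simp
  with k(2) show ?thesis by auto
qed

context positive_null_Z_matrix
begin

text \<open>The rational solution of the reduced system for p = 0 equals u / u 0 by uniqueness over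
  the reals, so it also satisfies the row that was dropped.\<close>
lemma positive_rat_null_vector:
  assumes "0 < n"
  shows "\<exists>q::nat \<Rightarrow> rat. (\<forall>i<n. q i > 0) \<and> (\<forall>i<n. matvec n M q i = 0)"
proof -
  obtain q :: "nat \<Rightarrow> rat" where q0: "q 0 = 1" and rows: "\<forall>i<n. i \<noteq> 0 \<longrightarrow> matvec n M q i = 0"
    using reduced_system_solvable[OF assms, of 1 "\<lambda>_. 0"] by blast
  have q_eq: "of_rat (q i) = inverse (u 0) * u i" if "i < n" for i
  proof -
    have "of_rat (q i) - inverse (u 0) * u i = 0"
    proof (rule null_except_row_zero[OF assms _ _ that])
      show "of_rat (q 0) - inverse (u 0) * u 0 = 0" using q0 u_pos[OF assms] by simp
      show "matvec n M (\<lambda>j. of_rat (q j) - inverse (u 0) * u j) k = 0" if "k < n" "k \<noteq> 0" for k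
        using rows u_null that by (simp add: matvec_diff matvec_of_rat matvec_scale)
    qed
    then show ?thesis by simp
  qed
  have "q i > 0" if "i < n" for i
    using q_eq[OF that] u_pos[OF that] u_pos[OF assms] zero_less_of_rat_iff[of "q i", where 'a=real] by simp
  moreover have "matvec n M q i = 0" if "i < n" for i
  proof -
    have "(of_rat (matvec n M q i) :: real) = inverse (u 0) * matvec n M u i"
      using q_eq by (simp add: matvec_of_rat[symmetric] matvec_scale[symmetric] cong: matvec_cong)
    then show ?thesis using u_null[OF that] by simp
  qed
  ultimately show ?thesis by blast
qed

lemma positive_int_null_vector_exists:
  assumes "0 < n"
  shows "\<exists>v. positive_int_null_vector n M v"
proof -
  obtain q :: "nat \<Rightarrow> rat" where q: "\<forall>i<n. q i > 0" "\<forall>i<n. matvec n M q i = 0"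
    using positive_rat_null_vector[OF assms] by blast
  obtain N where N: "N \<in> \<int>" "N > 0" "\<forall>i<n. q i * N \<in> \<int>"
    using common_denominator[of n q] by blast
  define v :: "nat \<Rightarrow> real" where "v i = (if i < n then of_rat (q i * N) else 0)" for i
  have "v i \<in> \<int>" if "i < n" for i
    using N(3) that by (auto simp: v_def elim!: Ints_cases)
  moreover have "matvec n M v i = 0" if "i < n" for i
  proof -
    have "matvec n M v i = matvec n M (\<lambda>j. of_rat N * of_rat (q j)) i"
      by (rule matvec_cong) (simp add: v_def of_rat_mult mult.commute)
    also have "\<dots> = of_rat N * of_rat (matvec n M q i)" by (simp add: matvec_scale matvec_of_rat)
    finally show ?thesis using q(2) that by simp
  qed
  ultimately have "positive_int_null_vector n M v"
    using q(1) N(2) by (auto simp: positive_int_null_vector_def v_def)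
  then show ?thesis by blast
qed

lemma null_vector_multiple_of_positive:
  fixes v w :: "nat \<Rightarrow> real"
  assumes v_pos: "\<And>i. i < n \<Longrightarrow> v i > 0" and v_null: "\<And>i. i < n \<Longrightarrow> matvec n M v i = 0"
    and w_null: "\<And>i. i < n \<Longrightarrow> matvec n M w i = 0"
  shows "\<exists>s. \<forall>i<n. w i = s * v i"
proof (cases "n = 0")
  case False
  obtain t where t: "\<forall>i<n. w i = t * u i" using null_vector_multiple w_null by blast
  obtain t' where t': "\<forall>i<n. v i = t' * u i" using null_vector_multiple v_null by blast
  have "t' > 0" using t' v_pos[of 0] u_pos[of 0] False by (auto simp: zero_less_mult_iff)
  then have "\<forall>i<n. w i = (t / t') * v i" using t t' by simp
  then show ?thesis by blast
qed simp

text \<open>If v had an integer null multiple w not of the form k v, then w - \<lfloor>s\<rfloor> v with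
  w = s v would be a smaller positive integer null vector.\<close>
lemma least_positive_int_null_vector_primitive:
  assumes v: "positive_int_null_vector n M v"
    and least: "\<And>w. positive_int_null_vector n M w \<Longrightarrow> v 0 \<le> w 0"
    and "0 < n"
  shows "primitive_null_vector n M v"
  unfolding primitive_null_vector_def
proof (intro conjI allI impI v)
  fix w :: "nat \<Rightarrow> real"
  assume w: "(\<forall>i. n \<le> i \<longrightarrow> w i = 0) \<and> (\<forall>i<n. w i \<in> \<int>) \<and> (\<forall>i<n. matvec n M w i = 0)"
  have v_props: "\<forall>i. n \<le> i \<longrightarrow> v i = 0" "\<forall>i<n. v i \<in> \<int> \<and> v i > 0" "\<forall>i<n. matvec n M v i = 0"
    using v by (auto simp: positive_int_null_vector_def)
  have "\<exists>s. \<forall>i<n. w i = s * v i"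
    by (rule null_vector_multiple_of_positive) (use v_props w in auto)
  then obtain s where s: "\<forall>i<n. w i = s * v i" ..
  define w' where "w' = (\<lambda>i. w i - of_int \<lfloor>s\<rfloor> * v i)"
  have w'_eq: "w' i = (s - of_int \<lfloor>s\<rfloor>) * v i" if "i < n" for i
    using s that by (simp add: w'_def algebra_simps)
  have "s = of_int \<lfloor>s\<rfloor>"
  proof (rule ccontr)
    assume "s \<noteq> of_int \<lfloor>s\<rfloor>"
    then have frac: "0 < s - of_int \<lfloor>s\<rfloor>" "s - of_int \<lfloor>s\<rfloor> < 1" by linarith+
    have "w' i \<in> \<int>" if "i < n" for i
      using w v_props that by (simp add: w'_def)
    moreover have "w' i > 0" if "i < n" for i
      using v_props that frac(1) w'_eq[OF that] by simp
    moreover have "matvec n M w' i = 0" if "i < n" for i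
      using w v_props that by (simp add: w'_def matvec_diff matvec_scale)
    moreover have "w' i = 0" if "n \<le> i" for i
      using w v_props that by (simp add: w'_def)
    ultimately have "positive_int_null_vector n M w'"
      by (simp add: positive_int_null_vector_def)
    then have "v 0 \<le> w' 0" by (rule least)
    moreover have "w' 0 < v 0" using w'_eq[OF \<open>0 < n\<close>] frac v_props(2) \<open>0 < n\<close> by simp
    ultimately show False by simp
  qed
  then obtain k :: int where k: "s = of_int k" by blast
  have "w i = of_int k * v i" for i
  proof (cases "i < n")
    case True
    then show ?thesis using s k by simp
  next
    case False
    then show ?thesis using w v_props(1) by simp
  qed
  then show "\<exists>k\<in>\<int>. \<forall>i. w i = k * v i" by (intro bexI[of _ "of_int k"]) simp_all
qed

lemma null_root_primitive:
  assumes "0 < n"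
  shows "primitive_null_vector n M (null_root n M)"
proof -
  obtain v0 where "positive_int_null_vector n M v0"
    using positive_int_null_vector_exists[OF assms] by blast
  then obtain v where v: "positive_int_null_vector n M v"
    and v_min: "\<And>w. positive_int_null_vector n M w \<Longrightarrow> nat \<lfloor>v 0\<rfloor> \<le> nat \<lfloor>w 0\<rfloor>"
    using ex_has_least_nat[of "positive_int_null_vector n M" v0 "\<lambda>v. nat \<lfloor>v 0\<rfloor>"] by blast
  have "v 0 \<le> w 0" if w: "positive_int_null_vector n M w" for w
  proof -
    have "v 0 \<in> \<int>" "w 0 \<in> \<int>" "v 0 > 0"
      using v w assms by (auto simp: positive_int_null_vector_def)
    then obtain a b where "v 0 = of_int a" "w 0 = of_int b" "a > 0"
      by (metis Ints_cases of_int_0_less_iff)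
    then show ?thesis using v_min[OF w] by simp
  qed
  then have "primitive_null_vector n M v"
    by (rule least_positive_int_null_vector_primitive[OF v _ assms])
  then have "\<exists>!v. primitive_null_vector n M v"
    using primitive_null_vector_unique[OF assms] by blast
  then show ?thesis unfolding null_root_eq_The by (rule theI')
qed

lemma null_root_positive_int_null_vector:
  assumes "0 < n"
  shows "positive_int_null_vector n M (null_root n M)"
  using null_root_primitive[OF assms] by (simp add: primitive_null_vector_def)

end

section \<open>The Euler form\<close>

definition cox_lower :: "(nat \<Rightarrow> nat \<Rightarrow> int) \<Rightarrow> nat \<Rightarrow> nat \<Rightarrow> int" where
  "cox_lower A i j = (if j < i then A i j else if i = j then 1 else 0)"

definition cox_upper :: "(nat \<Rightarrow> nat \<Rightarrow> int) \<Rightarrow> nat \<Rightarrow> nat \<Rightarrow> int" where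
  "cox_upper A i j = (if i < j then A i j else if i = j then 1 else 0)"

lemma matvec_cox_upper_plus_lower:
  assumes "A i i = 2"
  shows "matvec n (cox_upper A) x i + matvec n (cox_lower A) x i = matvec n A x i"
proof -
  have "of_int (cox_upper A i j) + of_int (cox_lower A i j) = (of_int (A i j) :: 'a::comm_ring_1)" for j
    using assms by (cases i j rule: linorder_cases) (simp_all add: cox_upper_def cox_lower_def)
  then show ?thesis
    unfolding matvec_def sum.distrib[symmetric] distrib_right[symmetric] by simp
qed

lemma Kform_eq_matvec: "Kform n A d u v = (\<Sum>i<n. d i * u i * matvec n A v i)"
  by (simp add: Kform_def matvec_def sum_distrib_left mult_ac)

lemma Ecform_eq_matvec: "Ecform n A d u v = (\<Sum>i<n. d i * u i * matvec n (cox_lower A) v i)"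
  by (simp add: Ecform_def matvec_def cox_lower_def sum_distrib_left mult_ac if_distrib[of of_int]
      cong: if_cong)

lemma Kform_null_right:
  assumes "\<And>i. i < n \<Longrightarrow> matvec n A e i = 0"
  shows "Kform n A d v e = 0"
  using assms by (simp add: Kform_eq_matvec)

lemma Kform_commute:
  assumes "symmetrizer n A d"
  shows "Kform n A d u v = Kform n A d v u"
proof -
  have "Kform n A d u v = (\<Sum>j<n. \<Sum>i<n. d i * of_int (A i j) * u i * v j)"
    unfolding Kform_def by (rule sum.swap)
  also have "\<dots> = Kform n A d v u"
    unfolding Kform_def
  proof (intro sum.cong[OF HOL.refl])
    fix i j assume "i \<in> {..<n}" "j \<in> {..<n}"
    then have "d j * of_int (A j i) = d i * of_int (A i j)"
      using assms by (simp add: symmetrizer_def)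
    then show "d j * of_int (A j i) * u j * v i = d i * of_int (A i j) * v i * u j"
      by (metis mult.commute mult.left_commute)
  qed
  finally show ?thesis .
qed

lemma matvec_transpose_symmetrizer:
  assumes "symmetrizer n A d" "i < n"
  shows "matvec n (\<lambda>i j. A j i) (\<lambda>j. d j * x j) i = d i * matvec n A x i"
proof -
  have "matvec n (\<lambda>i j. A j i) (\<lambda>j. d j * x j) i = (\<Sum>j<n. d i * (of_int (A i j) * x j))"
    unfolding matvec_def
  proof (intro sum.cong[OF HOL.refl])
    fix j assume "j \<in> {..<n}"
    then have "d j * of_int (A j i) = d i * of_int (A i j)"
      using assms by (simp add: symmetrizer_def)
    then show "of_int (A j i) * (d j * x j) = d i * (of_int (A i j) * x j)"
      by (metis mult.assoc mult.commute)
  qed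
  then show ?thesis by (simp add: matvec_def sum_distrib_left)
qed

lemma Ecform_add_swap:
  assumes "symmetrizer n A d" and diag: "\<And>i. i < n \<Longrightarrow> A i i = 2"
  shows "Ecform n A d u v + Ecform n A d v u = Kform n A d u v"
proof -
  have entry: "d i * (if i > j then of_int (A i j) else if i = j then 1 else 0)
      + d j * (if j > i then of_int (A j i) else if j = i then 1 else 0) = d i * of_int (A i j)"
    if "i < n" "j < n" for i j
    using assms that by (cases i j rule: linorder_cases) (simp_all add: symmetrizer_def)
  have "Ecform n A d v u = (\<Sum>i<n. \<Sum>j<n.
      d j * (if j > i then of_int (A j i) else if j = i then 1 else 0) * u i * v j)"
    unfolding Ecform_def by (subst sum.swap) (simp add: mult_ac)
  then show ?thesis
    unfolding Ecform_def Kform_def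
    by (simp add: sum.distrib[symmetric] entry distrib_right[symmetric] flip: mult.assoc)
qed

lemma Ecform_scale_left:
  assumes "\<And>i. i < n \<Longrightarrow> u i = t * u' i"
  shows "Ecform n A d u v = t * Ecform n A d u' v"
  using assms by (simp add: Ecform_eq_matvec sum_distrib_left mult_ac)

section \<open>Coxeter elements\<close>

lemma sref_apply:
  assumes "d i \<noteq> 0" "i < n"
  shows "sref n A d i w = (\<lambda>j. if j = i then w i - matvec n A w i else w j)"
proof -
  have "(\<Sum>j<n. d k * of_int (A k j) * simple_coroot d i k * w j) = (if k = i then matvec n A w i else 0)"
    for k
    using assms(1) by (auto simp: simple_coroot_def simple_root_def matvec_def)
  then have "Kform n A d (simple_coroot d i) w = matvec n A w i"
    using assms(2) by (simp add: Kform_def)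
  then show ?thesis by (auto simp: sref_def simple_root_def)
qed

definition partial_cox :: "nat \<Rightarrow> (nat \<Rightarrow> nat \<Rightarrow> int) \<Rightarrow> (nat \<Rightarrow> real) \<Rightarrow> nat \<Rightarrow> (nat \<Rightarrow> real) \<Rightarrow> (nat \<Rightarrow> real)" where
  "partial_cox n A d m v = foldr (sref n A d) [m..<n] v"

lemma partial_cox_Suc:
  "m < n \<Longrightarrow> partial_cox n A d m v = sref n A d m (partial_cox n A d (Suc m) v)"
  by (simp add: partial_cox_def upt_conv_Cons)

lemma cox_eq_partial_cox: "cox n A d v = partial_cox n A d 0 v"
  by (simp add: cox_def partial_cox_def)

context
  fixes n :: nat and A :: "nat \<Rightarrow> nat \<Rightarrow> int" and d :: "nat \<Rightarrow> real"
  assumes d_nonzero: "\<And>i. i < n \<Longrightarrow> d i \<noteq> 0"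
begin

lemma partial_cox_untouched:
  "j < m \<or> n \<le> j \<Longrightarrow> partial_cox n A d m v j = v j"
proof (induction "n - m" arbitrary: m)
  case 0
  then show ?case by (simp add: partial_cox_def)
next
  case (Suc k)
  then have "m < n" "j \<noteq> m" by auto
  moreover have "partial_cox n A d (Suc m) v j = v j" using Suc by auto
  ultimately show ?case using d_nonzero by (simp add: partial_cox_Suc sref_apply)
qed

text \<open>Coordinate j is last changed by the factor s_j.\<close>
lemma partial_cox_settled:
  "m \<le> j \<Longrightarrow> partial_cox n A d m v j = partial_cox n A d j v j"
proof (induction "j - m" arbitrary: m)
  case (Suc k)
  show ?case
  proof (cases "n \<le> j")
    case True
    then show ?thesis using partial_cox_untouched by simp
  next
    case False
    with Suc have "m < n" "m \<noteq> j" by auto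
    moreover have "partial_cox n A d (Suc m) v j = partial_cox n A d j v j" using Suc by auto
    ultimately show ?thesis using d_nonzero by (simp add: partial_cox_Suc sref_apply)
  qed
qed simp

lemma cox_outside: "n \<le> j \<Longrightarrow> cox n A d v j = v j"
  by (simp add: cox_eq_partial_cox partial_cox_untouched)

lemma cox_coordinate:
  assumes i: "i < n"
  shows "cox n A d v i = v i - matvec n A (\<lambda>k. if k \<le> i then v k else cox n A d v k) i"
proof -
  have before: "partial_cox n A d (Suc i) v = (\<lambda>k. if k \<le> i then v k else cox n A d v k)"
  proof (rule ext)
    fix k
    show "partial_cox n A d (Suc i) v k = (if k \<le> i then v k else cox n A d v k)"
    proof (cases "k \<le> i")
      case False
      then have "partial_cox n A d (Suc i) v k = partial_cox n A d k v k"
        by (intro partial_cox_settled) simp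
      also have "\<dots> = cox n A d v k"
        unfolding cox_eq_partial_cox by (rule partial_cox_settled[symmetric]) simp
      finally show ?thesis using False by simp
    qed (simp add: partial_cox_untouched)
  qed
  have "cox n A d v i = partial_cox n A d i v i"
    unfolding cox_eq_partial_cox by (rule partial_cox_settled) simp
  also have "\<dots> = v i - matvec n A (partial_cox n A d (Suc i) v) i"
    using i d_nonzero by (simp add: partial_cox_Suc sref_apply partial_cox_untouched)
  finally show ?thesis unfolding before .
qed

text \<open>With A = U + L the splitting into unitriangular upper and lower parts, this is the
  factorization c = - U^-1 L of a Coxeter element.\<close>
lemma matvec_cox_upper_cox:
  assumes diag: "A i i = 2" and i: "i < n"
  shows "matvec n (cox_upper A) (cox n A d v) i = - matvec n (cox_lower A) v i"
proof -
  define w where "w = cox n A d v"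
  define mixed where "mixed = (\<lambda>k. if k \<le> i then v k else w k)"
  have "of_int (cox_upper A i k) * w k + of_int (cox_lower A i k) * v k
      = of_int (A i k) * mixed k + (if k = i then w i - v i else 0)" for k
    using diag by (cases k i rule: linorder_cases) (simp_all add: cox_upper_def cox_lower_def mixed_def)
  then have "matvec n (cox_upper A) w i + matvec n (cox_lower A) v i
      = (\<Sum>k<n. of_int (A i k) * mixed k + (if k = i then w i - v i else 0))"
    by (simp add: matvec_def flip: sum.distrib)
  also have "\<dots> = matvec n A mixed i + (w i - v i)"
    using i by (simp add: matvec_def sum.distrib)
  also have "\<dots> = 0"
    unfolding w_def mixed_def using cox_coordinate[OF i, of v] by simp
  finally show ?thesis by (simp add: w_def eq_neg_iff_add_eq_0)
qed

end

lemma cox_upper_null_zero: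
  fixes w :: "nat \<Rightarrow> real"
  assumes "\<And>i. i < n \<Longrightarrow> matvec n (cox_upper A) w i = 0" and "i < n"
  shows "w i = 0"
  using assms(2)
proof (induction "n - i" arbitrary: i rule: less_induct)
  case (less i)
  have "matvec n (cox_upper A) w i = (\<Sum>j<n. if j = i then w j else 0)"
    unfolding matvec_def using less by (intro sum.cong HOL.refl) (auto simp: cox_upper_def)
  also have "\<dots> = w i" using less.prems by simp
  finally show ?case using assms(1)[OF less.prems] by simp
qed

lemma cox_eq_add_iff:
  assumes d: "\<And>i. i < n \<Longrightarrow> d i \<noteq> 0" and diag: "\<And>i. i < n \<Longrightarrow> A i i = 2"
    and e_null: "\<And>i. i < n \<Longrightarrow> matvec n A e i = 0" and e_out: "\<And>j. n \<le> j \<Longrightarrow> e j = 0"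
  shows "cox n A d g = (\<lambda>j. g j + e j) \<longleftrightarrow> (\<forall>i<n. matvec n A g i = matvec n (cox_lower A) e i)"
proof -
  have key: "matvec n (cox_upper A) (\<lambda>j. cox n A d g j - g j - e j) i
      = matvec n (cox_lower A) e i - matvec n A g i" if i: "i < n" for i
    unfolding matvec_diff
    using matvec_cox_upper_cox[where n = n and d = d and A = A and v = g, OF d diag[OF i] i] e_null[OF i]
      matvec_cox_upper_plus_lower[where n = n and A = A and i = i and x = g, OF diag[OF i]]
      matvec_cox_upper_plus_lower[where n = n and A = A and i = i and x = e, OF diag[OF i]]
    by linarith
  show ?thesis
  proof
    assume "cox n A d g = (\<lambda>j. g j + e j)"
    then show "\<forall>i<n. matvec n A g i = matvec n (cox_lower A) e i"
      using key by (simp add: matvec_def)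
  next
    assume rows: "\<forall>i<n. matvec n A g i = matvec n (cox_lower A) e i"
    have "cox n A d g j - g j - e j = 0" if "j < n" for j
      by (rule cox_upper_null_zero[where A = A, OF _ that]) (simp add: key rows)
    moreover have "cox n A d g j = g j + e j" if "n \<le> j" for j
      using cox_outside[where n = n and d = d and A = A, OF d that] e_out[OF that] by simp
    ultimately show "cox n A d g = (\<lambda>j. g j + e j)"
      by (metis add.commute diff_diff_eq eq_iff_diff_eq_0 not_le)
  qed
qed

section \<open>Affine Cartan matrices\<close>

locale affine_cartan =
  fixes n :: nat and A :: "nat \<Rightarrow> nat \<Rightarrow> int" and d :: "nat \<Rightarrow> real"
  assumes affine: "affine_type n A" and symm: "symmetrizer n A d"
begin

lemma n_pos: "0 < n"
  and diag: "\<And>i. i < n \<Longrightarrow> A i i = 2"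
  and off_diag: "\<And>i j. i < n \<Longrightarrow> j < n \<Longrightarrow> i \<noteq> j \<Longrightarrow> A i j \<le> 0"
  and zero_sym: "\<forall>i<n. \<forall>j<n. A i j = 0 \<longleftrightarrow> A j i = 0"
  and indec: "indecomposable n A"
  and d_pos: "\<And>i. i < n \<Longrightarrow> d i > 0"
  using affine symm by (auto simp: affine_type_def gcm_def symmetrizer_def)

lemma d_nonzero: "i < n \<Longrightarrow> d i \<noteq> 0"
  using d_pos[of i] by simp

lemma delta_positive_int_null_vector: "positive_int_null_vector n A (delta n A)"
proof -
  obtain u :: "nat \<Rightarrow> real" where "\<forall>i<n. u i > 0" "\<forall>i<n. matvec n A u i = 0"
    using affine by (auto simp: affine_type_def matvec_def)
  then interpret positive_null_Z_matrix n A u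
    using off_diag indec by unfold_locales auto
  show ?thesis unfolding delta_def by (rule null_root_positive_int_null_vector[OF n_pos])
qed

lemma delta_null: "\<And>i. i < n \<Longrightarrow> matvec n A (delta n A) i = 0"
  and delta_pos: "\<And>i. i < n \<Longrightarrow> delta n A i > 0"
  and delta_outside: "\<And>j. n \<le> j \<Longrightarrow> delta n A j = 0"
  using delta_positive_int_null_vector by (auto simp: positive_int_null_vector_def)

sublocale positive_null_Z_matrix n A "delta n A"
  using off_diag indec delta_pos delta_null by unfold_locales

lemma transpose_positive_null_Z_matrix:
  "positive_null_Z_matrix n (\<lambda>i j. A j i) (\<lambda>i. d i * delta n A i)"
  using off_diag indecomposable_transpose[OF indec zero_sym] d_pos delta_pos delta_null
  by unfold_locales (auto simp: matvec_transpose_symmetrizer[OF symm])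

lemma delta_vee_multiple: "\<exists>t. \<forall>i<n. delta_vee n A d i = t * delta n A i"
proof -
  interpret T: positive_null_Z_matrix n "\<lambda>i j. A j i" "\<lambda>i. d i * delta n A i"
    by (rule transpose_positive_null_Z_matrix)
  have "\<forall>i<n. matvec n (\<lambda>i j. A j i) (null_root n (\<lambda>i j. A j i)) i = 0"
    using T.null_root_positive_int_null_vector[OF n_pos] by (simp add: positive_int_null_vector_def)
  then obtain t where "\<forall>i<n. null_root n (\<lambda>i j. A j i) i = t * (d i * delta n A i)"
    using T.null_vector_multiple by blast
  then have "\<forall>i<n. delta_vee n A d i = t * delta n A i"
    using d_pos by (simp add: delta_vee_def less_imp_neq[symmetric])
  then show ?thesis ..
qed

lemma Ecform_delta_delta: "Ecform n A d (delta n A) (delta n A) = 0"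
  using Ecform_add_swap[OF symm diag, of "delta n A" "delta n A"] Kform_null_right[OF delta_null]
  by simp

lemma cox_eq_add_delta_iff:
  "cox n A d g = (\<lambda>j. g j + delta n A j) \<longleftrightarrow>
    (\<forall>i<n. matvec n A g i = matvec n (cox_lower A) (delta n A) i)"
  by (rule cox_eq_add_iff) (simp_all add: d_nonzero diag delta_null delta_outside)

lemma ex1_gamma_c:
  assumes aff: "aff < n"
  shows "\<exists>!g. (\<forall>j. (n \<le> j \<or> j = aff) \<longrightarrow> g j = 0) \<and> cox n A d g = (\<lambda>j. g j + delta n A j)"
proof -
  let ?b = "\<lambda>i. matvec n (cox_lower A) (delta n A) i"
  obtain x where x_aff: "x aff = 0" and x_rows: "\<forall>i<n. i \<noteq> aff \<longrightarrow> matvec n A x i = ?b i"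
    using reduced_system_solvable[OF aff] by blast
  text \<open>The row aff is not lost: d \<delta> is a left null vector of A, and E(\<delta>, \<delta>) = 0.\<close>
  have "(\<Sum>i<n. d i * delta n A i * (matvec n A x i - ?b i))
      = Kform n A d (delta n A) x - Ecform n A d (delta n A) (delta n A)"
    by (simp add: Kform_eq_matvec Ecform_eq_matvec right_diff_distrib sum_subtractf)
  also have "\<dots> = 0"
    using Kform_commute[OF symm] Kform_null_right[OF delta_null] Ecform_delta_delta by simp
  finally have total: "(\<Sum>i<n. d i * delta n A i * (matvec n A x i - ?b i)) = 0" .
  have "(\<Sum>i<n. d i * delta n A i * (matvec n A x i - ?b i))
      = (\<Sum>i<n. if i = aff then d aff * delta n A aff * (matvec n A x aff - ?b aff) else 0)"
    using x_rows by (intro sum.cong[OF HOL.refl]) auto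
  with total have "d aff * delta n A aff * (matvec n A x aff - ?b aff) = 0"
    using aff by simp
  then have "matvec n A x aff = ?b aff"
    using d_pos[OF aff] delta_pos[OF aff] by simp
  with x_rows have x_null: "\<forall>i<n. matvec n A x i = ?b i" by blast
  define g where "g = (\<lambda>j. if j < n then x j else 0)"
  have g_rows: "\<forall>i<n. matvec n A g i = ?b i"
    using x_null by (simp add: g_def cong: matvec_cong)
  show ?thesis
  proof (rule ex1I[of _ g])
    show "(\<forall>j. (n \<le> j \<or> j = aff) \<longrightarrow> g j = 0) \<and> cox n A d g = (\<lambda>j. g j + delta n A j)"
      using x_aff g_rows cox_eq_add_delta_iff by (auto simp: g_def)
  next
    fix g' assume g': "(\<forall>j. (n \<le> j \<or> j = aff) \<longrightarrow> g' j = 0) \<and> cox n A d g' = (\<lambda>j. g' j + delta n A j)"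
    have "g' i - g i = 0" if "i < n" for i
    proof (rule null_except_row_zero[OF aff _ _ that])
      show "g' aff - g aff = 0" using g' x_aff aff by (simp add: g_def)
      show "matvec n A (\<lambda>j. g' j - g j) k = 0" if "k < n" "k \<noteq> aff" for k
        using g' g_rows cox_eq_add_delta_iff that by (simp add: matvec_diff)
    qed
    moreover have "g' j = g j" if "n \<le> j" for j
      using g' that by (simp add: g_def)
    ultimately show "g' = g" by (metis eq_iff_diff_eq_0 not_le ext)
  qed
qed

lemma Kform_gamma_c:
  assumes "aff < n"
  shows "Kform n A d (gamma_c n A d aff) v = Ecform n A d v (delta n A)"
proof -
  let ?g = "gamma_c n A d aff"
  have "cox n A d ?g = (\<lambda>j. ?g j + delta n A j)"
    using theI'[OF ex1_gamma_c[OF assms]] by (simp add: gamma_c_def)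
  then have rows: "\<forall>i<n. matvec n A ?g i = matvec n (cox_lower A) (delta n A) i"
    by (simp add: cox_eq_add_delta_iff)
  have "Kform n A d ?g v = Kform n A d v ?g" by (rule Kform_commute[OF symm])
  also have "\<dots> = Ecform n A d v (delta n A)"
    using rows by (simp add: Kform_eq_matvec Ecform_eq_matvec)
  finally show ?thesis .
qed

end

theorem proposition2p16:
  fixes n :: nat and A :: "nat \<Rightarrow> nat \<Rightarrow> int" and d :: "nat \<Rightarrow> real"
    and aff :: nat and \<beta> :: "nat \<Rightarrow> real"
  assumes "affine_type n A"
    and "symmetrizer n A d"
    and "aff < n"
    and "\<beta> \<in> roots n A d"
    and "\<beta> \<in> U_c n A d aff"
  shows "Ecform n A d (coroot n A d \<beta>) (delta n A) = 0 \<and>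
         Ecform n A d (delta_vee n A d) \<beta> = 0"
proof -
  interpret affine_cartan n A d using assms(1,2) by unfold_locales
  let ?\<delta> = "delta n A"
  have E_beta_delta: "Ecform n A d \<beta> ?\<delta> = 0"
    using assms(5) Kform_gamma_c[OF assms(3)] by (simp add: U_c_def)
  have E_delta_beta: "Ecform n A d ?\<delta> \<beta> = 0"
    using Ecform_add_swap[OF symm diag, of \<beta> ?\<delta>] Kform_null_right[OF delta_null] E_beta_delta
    by simp
  obtain t where t: "\<forall>i<n. delta_vee n A d i = t * ?\<delta> i"
    using delta_vee_multiple by blast
  have "Ecform n A d (coroot n A d \<beta>) ?\<delta> = 0"
  proof (cases "\<beta> \<in> real_roots n A d")
    case True
    then show ?thesis
      using E_beta_delta by (simp add: Ecform_scale_left[of n _ "2 / Kform n A d \<beta> \<beta>" \<beta>] coroot_def)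
  next
    case False
    then show ?thesis
      using Ecform_delta_delta t
      by (simp add: coroot_def Ecform_scale_left[of n _ "(THE k. \<forall>j. \<beta> j = k * ?\<delta> j) * t" ?\<delta>])
  qed
  moreover have "Ecform n A d (delta_vee n A d) \<beta> = 0"
    using E_delta_beta t by (simp add: Ecform_scale_left[of n _ t ?\<delta>])
  ultimately show ?thesis ..
qed

end
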